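(* Under the setting below with the randomized sampling requirement, assume additionally that $G$ is convex and each $f_i$ is $\mu_{f_i}$-strongly convex ($\mu_{f_i}>0$). Let $\bm x^\star$ be the unique minimizer of $\Phi$, $\mu_F:=\frac1N\operatorname{blockdiag}(\mu_{f_1}I_{n_1},\dots,\mu_{f_N}I_{n_N})$, $\xi_i:=\frac{N-\gamma_iL_{f_i}}{N}$, and $c:=\min_{i\in[N]}\{\xi_ip_i/\gamma_i\}\,\big/\,\max_{i\in[N]}\{(N-\gamma_i\mu_{f_i})/(\gamma_i^2\mu_{f_i})\}$. Then for all $k$: $\mathbb E_k[\Phi^{\mathrm{FB}}_\Gamma(\bm x^{k+1})-\min\Phi]\le(1-c)(\Phi^{\mathrm{FB}}_\Gamma(\bm x^k)-\min\Phi)$, $\mathbb E[\Phi(\bm z^k)-\min\Phi]\le(\Phi(\bm x^0)-\min\Phi)(1-c)^k$, and $\frac12\mathbb E[\|\bm z^k-\bm x^\star\|^2_{\mu_F}]\le(\Phi(\bm x^0)-\min\Phi)(1-c)^k$. Moreover, assuming $\kappa_i:=L_{f_i}/\mu_{f_i}>1$ for all $i$, if the stepsizes and minimal sampling probabilities are chosen as $\gamma_i=\frac{N}{\mu_{f_i}}(1-\sqrt{1-1/\kappa_i})$ and $p_i=\frac{(\sqrt{\kappa_i}+\sqrt{\kappa_i-1})^2}{\sum_{j=1}^N(\sqrt{\kappa_j}+\sqrt{\kappa_j-1})^2}$, then the three inequalities hold with $c=1\big/\sum_{i=1}^N(\sqrt{\kappa_i}+\sqrt{\kappa_i-1})^2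$.
   Context: Setting: $N\ge1$, $n=\sum_{i=1}^N n_i$, $\bm x=(x_1,\dots,x_N)$ with $x_i\in\mathbb R^{n_i}$; $\Phi=F+G$ with $F(\bm x)=\frac1N\sum_i f_i(x_i)$, each $f_i:\mathbb R^{n_i}\to\mathbb R$ differentiable with $L_{f_i}$-Lipschitz gradient, $G:\mathbb R^n\to\mathbb R\cup\{+\infty\}$ proper lsc, $\arg\min\Phi\ne\emptyset$. $\gamma_i\in(0,N/L_{f_i})$, $\Gamma=\operatorname{blockdiag}(\gamma_1I_{n_1},\dots,\gamma_NI_{n_N})$, $\|x\|_V^2=\langle x,Vx\rangle$, $\operatorname{prox}_G^{V}(u)=\arg\min_w\{G(w)+\frac12\|w-u\|_V^2\}$, $\mathbf T(\bm x)=\operatorname{prox}_G^{\Gamma^{-1}}(\bm x-\Gamma\nabla F(\bm x))$. Forward-backward envelope: $\Phi^{\mathrm{FB}}_\Gamma(\bm x):=\inf_{\bm w}\{F(\bm x)+\langle\nabla F(\bm x),\bm w-\bm x\rangle+G(\bm w)+\frac12\|\bm w-\bm x\|^2_{\Gamma^{-1}}\}$. Algorithm BC: given $\bm x^0\in\mathbb R^n$, for $k=0,1,\dots$: pick $\bm z^k\in\mathbf T(\bm x^k)$; select $I^{k+1}\subseteq[N]$; set $x_i^{k+1}=z_i^k$ for $i\in I^{k+1}$ and $x_i^{k+1}=x_i^k$ otherwise. Randomized sampling requirement: there exist $p_1,\dots,p_N>0$ such that at every iteration, conditionally on the past, $\mathbb P(i\in I^{k+1})\ge p_i$ for every $i$.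 $\mathbb E_k$ denotes expectation conditional on the history up to iteration $k$; $\mathbb E$ is unconditional expectation. *)

theory Defs
  imports "HOL-Analysis.Analysis" "HOL-Probability.Probability"
begin

text \<open>The whole space R^n is real^'c (coordinates 'c, n = CARD('c));
  the blocks are indexed by the finite type 'n (N = CARD('n)); coordinate j belongs to
  block blk j.  Block i (i.e. R^(n_i)) is the subspace of vectors supported on
  {j. blk j = i}.\<close>

definition blockproj :: "('c::finite \<Rightarrow> 'n) \<Rightarrow> 'n \<Rightarrow> real^'c \<Rightarrow> real^'c" where
  "blockproj blk i x = (\<chi> j. if blk j = i then x $ j else 0)"

text \<open>Weighted squared norm  ||v||_V^2 = <v, V v>  for a diagonal V = diag(w).\<close>
definition wnormsq :: "('c::finite \<Rightarrow> real) \<Rightarrow> real^'c \<Rightarrow> real" where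
  "wnormsq w v = (\<Sum>j\<in>UNIV. w j * (v $ j)^2)"

definition Gamma_mult :: "('c::finite \<Rightarrow> 'n) \<Rightarrow> ('n \<Rightarrow> real) \<Rightarrow> real^'c \<Rightarrow> real^'c" where
  "Gamma_mult blk \<gamma> v = (\<chi> j. \<gamma> (blk j) * v $ j)"

definition Ginv_normsq :: "('c::finite \<Rightarrow> 'n) \<Rightarrow> ('n \<Rightarrow> real) \<Rightarrow> real^'c \<Rightarrow> real" where
  "Ginv_normsq blk \<gamma> v = wnormsq (\<lambda>j. 1 / \<gamma> (blk j)) v"

text \<open>F(x) = (1/N) sum_i f_i(x_i) and its gradient (each f i is a function of block i only).\<close>
definition Fsum :: "('n::finite \<Rightarrow> real^'c::finite \<Rightarrow> real) \<Rightarrow> real^'c \<Rightarrow> real" where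
  "Fsum f x = (1 / real CARD('n)) * (\<Sum>i\<in>UNIV. f i x)"

definition gradF :: "('n::finite \<Rightarrow> real^'c::finite \<Rightarrow> real^'c) \<Rightarrow> real^'c \<Rightarrow> real^'c" where
  "gradF df x = (1 / real CARD('n)) *\<^sub>R (\<Sum>i\<in>UNIV. df i x)"

definition Phi :: "('n::finite \<Rightarrow> real^'c::finite \<Rightarrow> real) \<Rightarrow> (real^'c \<Rightarrow> ereal) \<Rightarrow> real^'c \<Rightarrow> ereal" where
  "Phi f G x = ereal (Fsum f x) + G x"

definition proper_fun :: "('a \<Rightarrow> ereal) \<Rightarrow> bool" where
  "proper_fun G \<longleftrightarrow> (\<forall>x. G x \<noteq> -\<infinity>) \<and> (\<exists>x. G x \<noteq> \<infinity>)"

definition lsc_fun :: "('a::topological_space \<Rightarrow> ereal) \<Rightarrow> bool" where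
  "lsc_fun G \<longleftrightarrow> (\<forall>a. closed {x. G x \<le> a})"

definition convex_ext :: "('a::real_vector \<Rightarrow> ereal) \<Rightarrow> bool" where
  "convex_ext G \<longleftrightarrow> convex {(x, t::real). G x \<le> ereal t}"

definition prox_Ginv :: "('c::finite \<Rightarrow> 'n) \<Rightarrow> ('n \<Rightarrow> real) \<Rightarrow> (real^'c \<Rightarrow> ereal) \<Rightarrow> real^'c \<Rightarrow> (real^'c) set" where
  "prox_Ginv blk \<gamma> G u =
     {w. \<forall>v. G w + ereal (Ginv_normsq blk \<gamma> (w - u) / 2) \<le> G v + ereal (Ginv_normsq blk \<gamma> (v - u) / 2)}"

definition Tmap :: "('c::finite \<Rightarrow> 'n::finite) \<Rightarrow> ('n \<Rightarrow> real) \<Rightarrow> ('n \<Rightarrow> real^'c \<Rightarrow> real^'c)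
     \<Rightarrow> (real^'c \<Rightarrow> ereal) \<Rightarrow> real^'c \<Rightarrow> (real^'c) set" where
  "Tmap blk \<gamma> df G x = prox_Ginv blk \<gamma> G (x - Gamma_mult blk \<gamma> (gradF df x))"

definition FBE :: "('c::finite \<Rightarrow> 'n::finite) \<Rightarrow> ('n \<Rightarrow> real) \<Rightarrow> ('n \<Rightarrow> real^'c \<Rightarrow> real)
     \<Rightarrow> ('n \<Rightarrow> real^'c \<Rightarrow> real^'c) \<Rightarrow> (real^'c \<Rightarrow> ereal) \<Rightarrow> real^'c \<Rightarrow> ereal" where
  "FBE blk \<gamma> f df G x =
     (INF w. ereal (Fsum f x + gradF df x \<bullet> (w - x) + Ginv_normsq blk \<gamma> (w - x) / 2) + G w)"

definition bc_update :: "('c::finite \<Rightarrow> 'n) \<Rightarrow> real^'c \<Rightarrow> real^'c \<Rightarrow> 'n set \<Rightarrow> real^'c" where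
  "bc_update blk x z I = (\<chi> j. if blk j \<in> I then z $ j else x $ j)"

text \<open>A history of length k is the list [I^k, ..., I^1] of the sampled
  index sets (most recent first).  sel h is the point z^k \<in> T(x^k) picked after history h;
  Q h is the (conditional) distribution of I^{k+1} given the history h.\<close>
primrec bc_iter :: "('c::finite \<Rightarrow> 'n) \<Rightarrow> real^'c \<Rightarrow> ('n set list \<Rightarrow> real^'c) \<Rightarrow> 'n set list \<Rightarrow> real^'c" where
  "bc_iter blk x0 sel [] = x0"
| "bc_iter blk x0 sel (I # h) = bc_update blk (bc_iter blk x0 sel h) (sel h) I"

primrec bc_hist :: "('n set list \<Rightarrow> 'n set pmf) \<Rightarrow> nat \<Rightarrow> 'n set list pmf" where
  "bc_hist Q 0 = return_pmf []"
| "bc_hist Q (Suc k) = bind_pmf (bc_hist Q k) (\<lambda>h. map_pmf (\<lambda>I. I # h) (Q h))"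

text \<open>The three conclusions of the theorem for a given rate c.  E_k is expectation over
  I^{k+1} ~ Q h for the given history h; E is expectation over the law of the history.\<close>
definition bc_rates :: "('c::finite \<Rightarrow> 'n::finite) \<Rightarrow> ('n \<Rightarrow> real) \<Rightarrow> ('n \<Rightarrow> real^'c \<Rightarrow> real)
     \<Rightarrow> ('n \<Rightarrow> real^'c \<Rightarrow> real^'c) \<Rightarrow> (real^'c \<Rightarrow> ereal) \<Rightarrow> ('n set list \<Rightarrow> 'n set pmf)
     \<Rightarrow> ('n set list \<Rightarrow> real^'c) \<Rightarrow> real^'c \<Rightarrow> real^'c \<Rightarrow> ('n \<Rightarrow> real) \<Rightarrow> real \<Rightarrow> bool" where
  "bc_rates blk \<gamma> f df G Q sel x0 xstar \<mu> c \<longleftrightarrow>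
     (\<forall>h. ereal (measure_pmf.expectation (Q h)
              (\<lambda>I. real_of_ereal (FBE blk \<gamma> f df G (bc_iter blk x0 sel (I # h)) - Phi f G xstar)))
          \<le> ereal (1 - c) * (FBE blk \<gamma> f df G (bc_iter blk x0 sel h) - Phi f G xstar))
   \<and> (\<forall>k. ereal (measure_pmf.expectation (bc_hist Q k)
              (\<lambda>h. real_of_ereal (Phi f G (sel h) - Phi f G xstar)))
          \<le> (Phi f G x0 - Phi f G xstar) * ereal ((1 - c) ^ k))
   \<and> (\<forall>k. ereal (measure_pmf.expectation (bc_hist Q k)
              (\<lambda>h. wnormsq (\<lambda>j. \<mu> (blk j) / real CARD('n)) (sel h - xstar) / 2))
          \<le> (Phi f G x0 - Phi f G xstar) * ereal ((1 - c) ^ k))"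

end

theory Submission
  imports Defs
begin

text \<open>The forward-backward envelope is a Lyapunov function.  For \<open>z \<in> T(x)\<close> the envelope
  at \<open>x\<close> is attained at \<open>z\<close>: it equals \<open>F(x) + \<langle>\<nabla>F(x), z - x\<rangle> + |z - x|\<^sup>2/2\<close> (norm weighted
  by \<open>\<Gamma>\<^sup>-\<^sup>1\<close>) plus \<open>G(z)\<close>.  Copying the blocks \<open>I\<close> of \<open>z\<close> into \<open>x\<close> lowers this model value
  at \<open>z\<close>, by the block descent lemma, by at least \<open>\<xi>\<^sub>i/(2\<gamma>\<^sub>i) |z\<^sub>i - x\<^sub>i|\<^sup>2\<close> for each \<open>i \<in> I\<close>, so in
  expectation by at least \<open>\<Sum>\<^sub>i p\<^sub>i \<xi>\<^sub>i/(2\<gamma>\<^sub>i) |z\<^sub>i - x\<^sub>i|\<^sup>2\<close>.  On the other hand, strong convexity of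
  \<open>F\<close> together with the variational inequality of the proximal step bounds the gap
  \<open>\<Phi>\<^sup>F\<^sup>B(x) - min \<Phi>\<close> by \<open>\<Sum>\<^sub>i (N - \<gamma>\<^sub>i\<mu>\<^sub>i)/(2\<gamma>\<^sub>i\<^sup>2\<mu>\<^sub>i) |z\<^sub>i - x\<^sub>i|\<^sup>2\<close> (a completed square).
  Any \<open>c\<close> for which \<open>c\<close> times the second coefficient is dominated by the first gives the
  contraction by \<open>1 - c\<close>; iterating it along the history and using \<open>\<Phi>(z) \<le> \<Phi>\<^sup>F\<^sup>B(x)\<close> and the
  quadratic growth of \<open>\<Phi>\<close> at its minimizer gives the other two bounds.  For the tuned
  stepsizes the ratio of the two coefficients is exactly \<open>(\<surd>\<kappa>\<^sub>i + \<surd>(\<kappa>\<^sub>i - 1))\<^sup>2\<close>, which the tuned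
  \<open>p\<^sub>i\<close> compensate.\<close>

lemma blockproj_nth [simp]: "blockproj blk i x $ j = (if blk j = i then x $ j else 0)"
  by (simp add: blockproj_def)

lemma blockproj_diff: "blockproj blk i (x - y) = blockproj blk i x - blockproj blk i y"
  by (simp add: vec_eq_iff)

lemma blockproj_add: "blockproj blk i (x + y) = blockproj blk i x + blockproj blk i y"
  by (simp add: vec_eq_iff)

lemma blockproj_scaleR: "blockproj blk i (t *\<^sub>R x) = t *\<^sub>R blockproj blk i x"
  by (simp add: vec_eq_iff)

lemma norm_blockproj_power2:
  "(norm (blockproj blk i x))\<^sup>2 = (\<Sum>j\<in>UNIV. if blk j = i then (x $ j)\<^sup>2 else 0)"
proof -
  have "(norm (blockproj blk i x))\<^sup>2 = (\<Sum>j\<in>UNIV. (blockproj blk i x $ j)\<^sup>2)"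
    unfolding norm_vec_def L2_set_def by (simp add: sum_nonneg)
  also have "\<dots> = (\<Sum>j\<in>UNIV. if blk j = i then (x $ j)\<^sup>2 else 0)"
    by (rule sum.cong) auto
  finally show ?thesis .
qed

lemma sum_over_blocks:
  fixes blk :: "'c::finite \<Rightarrow> 'n::finite" and h :: "'n \<Rightarrow> 'c \<Rightarrow> real"
  shows "(\<Sum>i\<in>UNIV. \<Sum>j\<in>UNIV. if blk j = i then h i j else 0) = (\<Sum>j\<in>UNIV. h (blk j) j)"
  by (subst sum.swap) (simp add: eq_commute[of "blk _"])

lemma sum_blocks_norm_blockproj:
  fixes blk :: "'c::finite \<Rightarrow> 'n::finite"
  shows "(\<Sum>i\<in>UNIV. c i * (norm (blockproj blk i d))\<^sup>2) = (\<Sum>j\<in>UNIV. c (blk j) * (d $ j)\<^sup>2)"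
proof -
  have "(\<Sum>i\<in>UNIV. c i * (norm (blockproj blk i d))\<^sup>2)
      = (\<Sum>i\<in>UNIV. \<Sum>j\<in>UNIV. if blk j = i then c i * (d $ j)\<^sup>2 else 0)"
    unfolding norm_blockproj_power2 sum_distrib_left by (intro sum.cong refl) auto
  also have "\<dots> = (\<Sum>j\<in>UNIV. c (blk j) * (d $ j)\<^sup>2)"
    by (rule sum_over_blocks)
  finally show ?thesis .
qed

lemma inner_real_vec_eq_sum: "(a::real^'c::finite) \<bullet> b = (\<Sum>j\<in>UNIV. a $ j * b $ j)"
  by (simp add: inner_vec_def)

lemma inner_blockproj:
  assumes "\<And>j. blk j \<noteq> i \<Longrightarrow> a $ j = 0"
  shows "(a::real^'c::finite) \<bullet> d = a \<bullet> blockproj blk i d"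
  unfolding inner_real_vec_eq_sum by (rule sum.cong) (auto simp: assms)

lemma Ginv_normsq_eq_sum: "Ginv_normsq blk \<gamma> v = (\<Sum>j\<in>UNIV. (v $ j)\<^sup>2 / \<gamma> (blk j))"
  by (simp add: Ginv_normsq_def wnormsq_def)

lemma GDERIV_along_line:
  fixes F :: "real^'c::finite \<Rightarrow> real"
  assumes "GDERIV F (x + t *\<^sub>R d) :> D"
  shows "((\<lambda>s. F (x + s *\<^sub>R d)) has_real_derivative (D \<bullet> d)) (at t)"
proof -
  have "((\<lambda>s. x + s *\<^sub>R d) has_derivative (\<lambda>s. s *\<^sub>R d)) (at t)"
    by (auto intro!: derivative_eq_intros)
  then have "((\<lambda>s. F (x + s *\<^sub>R d)) has_derivative (\<lambda>s. (s *\<^sub>R d) \<bullet> D)) (at t)"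
    using has_derivative_compose assms unfolding gderiv_def by blast
  moreover have "(\<lambda>s. (s *\<^sub>R d) \<bullet> D) = (\<lambda>s. (D \<bullet> d) * s)"
    by (auto simp: inner_commute)
  ultimately show ?thesis
    unfolding has_field_derivative_def by simp
qed

lemma nonneg_of_quadratic_nonneg_near_zero:
  fixes a c :: real
  assumes "c \<ge> 0" and "\<And>t. 0 < t \<Longrightarrow> t \<le> 1 \<Longrightarrow> 0 \<le> t * a + t\<^sup>2 * c"
  shows "0 \<le> a"
proof (rule ccontr)
  assume "\<not> 0 \<le> a"
  define t where "t = min 1 ((- a) / (2 * (c + 1)))"
  have "(- a) / (2 * (c + 1)) > 0"
    using \<open>\<not> 0 \<le> a\<close> assms(1) by (intro divide_pos_pos) auto
  then have t: "0 < t" "t \<le> 1" by (auto simp: t_def)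
  have "0 \<le> t * (a + t * c)"
    using assms(2)[OF t] by (simp add: power2_eq_square algebra_simps)
  then have "0 \<le> a + t * c"
    using t(1) by (simp add: zero_le_mult_iff)
  moreover have "t * c \<le> ((- a) / (2 * (c + 1))) * c"
    using t assms(1) by (intro mult_right_mono) (auto simp: t_def)
  moreover have "((- a) / (2 * (c + 1))) * c \<le> (- a) / 2"
    using \<open>\<not> 0 \<le> a\<close> assms(1) by (simp add: field_simps)
  ultimately show False using \<open>\<not> 0 \<le> a\<close> by linarith
qed

section \<open>Block-separable smooth strongly convex sums\<close>

locale block_smooth =
  fixes blk :: "'c::finite \<Rightarrow> 'n::finite"
    and f :: "'n \<Rightarrow> real^'c \<Rightarrow> real"
    and df :: "'n \<Rightarrow> real^'c \<Rightarrow> real^'c"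
    and L \<mu> :: "'n \<Rightarrow> real"
  assumes f_block: "\<And>i x. f i x = f i (blockproj blk i x)"
    and f_grad: "\<And>i x. GDERIV (f i) x :> df i x"
    and f_lipschitz: "\<And>i x y. norm (df i x - df i y) \<le> L i * norm (blockproj blk i x - blockproj blk i y)"
    and f_strongly_convex: "\<And>i. convex_on UNIV (\<lambda>x. f i x - \<mu> i / 2 * (norm (blockproj blk i x))\<^sup>2)"
begin

lemma f_cong_blockproj:
  assumes "blockproj blk i x = blockproj blk i y"
  shows "f i x = f i y"
  using f_block[of i x] f_block[of i y] assms by simp

lemma df_cong_blockproj:
  assumes "blockproj blk i x = blockproj blk i y"
  shows "df i x = df i y"
  using f_lipschitz[of i x y] assms by simp

lemma df_outside_block:
  assumes "blk j \<noteq> i"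
  shows "df i x $ j = 0"
proof -
  let ?e = "axis j (1::real) :: real^'c"
  have "blockproj blk i (x + s *\<^sub>R ?e) = blockproj blk i x" for s
    using assms by (auto simp: vec_eq_iff axis_def)
  then have const: "f i (x + s *\<^sub>R ?e) = f i x" for s
    by (rule f_cong_blockproj)
  have "((\<lambda>s. f i (x + s *\<^sub>R ?e)) has_real_derivative (df i x \<bullet> ?e)) (at 0)"
    using GDERIV_along_line[of "f i" x 0 ?e] f_grad by simp
  then have "df i x \<bullet> ?e = 0"
    unfolding const using DERIV_unique DERIV_const by blast
  then show ?thesis by (simp add: inner_axis)
qed

lemma inner_df_blockproj: "df i x \<bullet> d = df i x \<bullet> blockproj blk i d"
  by (rule inner_blockproj) (simp add: df_outside_block)

lemma block_descent:
  "f i y \<le> f i x + df i x \<bullet> (y - x) + L i / 2 * (norm (blockproj blk i (y - x)))\<^sup>2"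
proof -
  define d where "d = y - x"
  define q where "q = (norm (blockproj blk i d))\<^sup>2"
  define \<phi> where "\<phi> t = f i (x + t *\<^sub>R d) - t * (df i x \<bullet> d) - L i / 2 * t\<^sup>2 * q" for t
  have "\<phi> 1 \<le> \<phi> 0"
  proof (rule DERIV_nonpos_imp_nonincreasing[of 0 1 \<phi>])
    fix t :: real assume t: "0 \<le> t" "t \<le> 1"
    have line: "((\<lambda>s. f i (x + s *\<^sub>R d)) has_real_derivative (df i (x + t *\<^sub>R d) \<bullet> d)) (at t)"
      by (rule GDERIV_along_line) (rule f_grad)
    have "(\<phi> has_real_derivative (df i (x + t *\<^sub>R d) \<bullet> d - df i x \<bullet> d - L i / 2 * (2 * t) * q)) (at t)"
      unfolding \<phi>_def by (rule derivative_eq_intros line | simp)+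
    moreover have "df i (x + t *\<^sub>R d) \<bullet> d - df i x \<bullet> d \<le> L i * t * q"
    proof -
      let ?a = "df i (x + t *\<^sub>R d) - df i x"
      have "?a \<bullet> d = ?a \<bullet> blockproj blk i d"
        by (rule inner_blockproj) (simp add: df_outside_block)
      also have "\<dots> \<le> norm ?a * norm (blockproj blk i d)"
        by (rule norm_cauchy_schwarz)
      also have "\<dots> \<le> L i * norm (blockproj blk i (x + t *\<^sub>R d) - blockproj blk i x) * norm (blockproj blk i d)"
        by (rule mult_right_mono[OF f_lipschitz]) simp
      also have "blockproj blk i (x + t *\<^sub>R d) - blockproj blk i x = t *\<^sub>R blockproj blk i d"
        by (simp add: blockproj_add blockproj_scaleR)
      also have "L i * norm (t *\<^sub>R blockproj blk i d) * norm (blockproj blk i d) = L i * t * q"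
        using t by (simp add: q_def power2_eq_square)
      finally show ?thesis by (simp add: inner_diff_left)
    qed
    then have "df i (x + t *\<^sub>R d) \<bullet> d - df i x \<bullet> d - L i / 2 * (2 * t) * q \<le> 0"
      by simp
    ultimately show "\<exists>y. (\<phi> has_real_derivative y) (at t) \<and> y \<le> 0"
      by blast
  qed simp
  then show ?thesis unfolding \<phi>_def q_def d_def by simp
qed

lemma block_strong_convexity:
  "f i x + df i x \<bullet> (y - x) + \<mu> i / 2 * (norm (blockproj blk i (y - x)))\<^sup>2 \<le> f i y"
proof -
  define d where "d = y - x"
  let ?P = "blockproj blk i"
  define \<psi> where "\<psi> s = f i (x + s *\<^sub>R d) - \<mu> i / 2 * (norm (?P (x + s *\<^sub>R d)))\<^sup>2" for s
  have convex: "convex_on UNIV \<psi>"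
  proof (rule convex_onI)
    fix t s1 s2 :: real assume t: "0 < t" "t < 1"
    have "x + ((1 - t) *\<^sub>R s1 + t *\<^sub>R s2) *\<^sub>R d = (1 - t) *\<^sub>R (x + s1 *\<^sub>R d) + t *\<^sub>R (x + s2 *\<^sub>R d)"
      by (simp add: algebra_simps)
    then show "\<psi> ((1 - t) *\<^sub>R s1 + t *\<^sub>R s2) \<le> (1 - t) * \<psi> s1 + t * \<psi> s2"
      unfolding \<psi>_def
      using convex_onD[OF f_strongly_convex[of i], of t "x + s1 *\<^sub>R d" "x + s2 *\<^sub>R d"] t by simp
  qed simp
  have norm_expand: "(norm (?P (x + s *\<^sub>R d)))\<^sup>2
      = (norm (?P x))\<^sup>2 + 2 * s * (?P x \<bullet> ?P d) + s\<^sup>2 * (norm (?P d))\<^sup>2" for s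
    unfolding power2_norm_eq_inner blockproj_add blockproj_scaleR
    by (simp add: inner_add_left inner_add_right algebra_simps power2_eq_square inner_commute)
  have "((\<lambda>s. f i (x + s *\<^sub>R d)) has_real_derivative (df i (x + 0 *\<^sub>R d) \<bullet> d)) (at 0)"
    by (rule GDERIV_along_line) (rule f_grad)
  then have "((\<lambda>s. f i (x + s *\<^sub>R d) - \<mu> i / 2 * ((norm (?P x))\<^sup>2 + 2 * s * (?P x \<bullet> ?P d) + s\<^sup>2 * (norm (?P d))\<^sup>2))
       has_real_derivative (df i x \<bullet> d - \<mu> i / 2 * (0 + 2 * 1 * (?P x \<bullet> ?P d) + 2 * 0 * (norm (?P d))\<^sup>2))) (at 0)"
    by (auto intro!: derivative_eq_intros)
  then have "(\<psi> has_real_derivative (df i x \<bullet> d - \<mu> i * (?P x \<bullet> ?P d))) (at 0)"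
    unfolding \<psi>_def norm_expand by simp
  then have "(df i x \<bullet> d - \<mu> i * (?P x \<bullet> ?P d)) * (1 - 0) \<le> \<psi> 1 - \<psi> 0"
    by (intro convex_on_imp_above_tangent[OF convex]) auto
  moreover have "\<psi> 1 = f i y - \<mu> i / 2 * ((norm (?P x))\<^sup>2 + 2 * (?P x \<bullet> ?P d) + (norm (?P d))\<^sup>2)"
    unfolding \<psi>_def using norm_expand[of 1] by (simp add: d_def)
  moreover have "\<psi> 0 = f i x - \<mu> i / 2 * (norm (?P x))\<^sup>2"
    unfolding \<psi>_def by simp
  ultimately show ?thesis
    unfolding d_def by (simp add: algebra_simps)
qed

lemma strong_convexity_le_lipschitz:
  assumes "blk j = i"
  shows "\<mu> i \<le> L i"
proof -
  let ?e = "axis j (1::real) :: real^'c"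
  have "(norm (blockproj blk i (?e - 0)))\<^sup>2 = (\<Sum>k\<in>UNIV. if k = j then 1 else 0)"
    unfolding norm_blockproj_power2 by (rule sum.cong) (auto simp: axis_def assms)
  then have "(norm (blockproj blk i (?e - 0)))\<^sup>2 = 1" by simp
  then show ?thesis
    using block_descent[of i ?e 0] block_strong_convexity[of i 0 ?e] by simp
qed

lemma Fsum_descent:
  "Fsum f y \<le> Fsum f x + gradF df x \<bullet> (y - x)
     + (1 / real CARD('n)) * (\<Sum>j\<in>UNIV. L (blk j) / 2 * ((y - x) $ j)\<^sup>2)"
proof -
  have "(\<Sum>i\<in>UNIV. f i y)
      \<le> (\<Sum>i\<in>UNIV. f i x + df i x \<bullet> (y - x) + L i / 2 * (norm (blockproj blk i (y - x)))\<^sup>2)"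
    by (intro sum_mono block_descent)
  also have "\<dots> = (\<Sum>i\<in>UNIV. f i x) + (\<Sum>i\<in>UNIV. df i x \<bullet> (y - x))
      + (\<Sum>j\<in>UNIV. L (blk j) / 2 * ((y - x) $ j)\<^sup>2)"
    by (simp only: sum.distrib sum_blocks_norm_blockproj)
  finally show ?thesis
    unfolding Fsum_def gradF_def inner_sum_left inner_scaleR_left distrib_left[symmetric]
    by (intro mult_left_mono) simp_all
qed

lemma Fsum_strong_convexity:
  "Fsum f x + gradF df x \<bullet> (y - x)
     + (1 / real CARD('n)) * (\<Sum>j\<in>UNIV. \<mu> (blk j) / 2 * ((y - x) $ j)\<^sup>2) \<le> Fsum f y"
proof -
  have "(\<Sum>i\<in>UNIV. f i x) + (\<Sum>i\<in>UNIV. df i x \<bullet> (y - x)) + (\<Sum>j\<in>UNIV. \<mu> (blk j) / 2 * ((y - x) $ j)\<^sup>2)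
      = (\<Sum>i\<in>UNIV. f i x + df i x \<bullet> (y - x) + \<mu> i / 2 * (norm (blockproj blk i (y - x)))\<^sup>2)"
    by (simp only: sum.distrib sum_blocks_norm_blockproj)
  also have "\<dots> \<le> (\<Sum>i\<in>UNIV. f i y)"
    by (intro sum_mono block_strong_convexity)
  finally show ?thesis
    unfolding Fsum_def gradF_def inner_sum_left inner_scaleR_left distrib_left[symmetric]
    by (intro mult_left_mono) simp_all
qed

text \<open>Only the blocks that are overwritten change the linearization of \<open>f i\<close> at the
  point \<open>z\<close>, and for such a block the descent lemma applies between \<open>x\<close> and \<open>z\<close>.\<close>

lemma block_update_linearization:
  fixes x z :: "real^'c" and I :: "'n set"
  defines "x' \<equiv> bc_update blk x z I"
  shows "f i x' + df i x' \<bullet> (z - x')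
    \<le> f i x + df i x \<bullet> (z - x) + (if i \<in> I then L i / 2 else 0) * (norm (blockproj blk i (z - x)))\<^sup>2"
proof (cases "i \<in> I")
  case True
  then have P: "blockproj blk i x' = blockproj blk i z"
    by (auto simp: vec_eq_iff bc_update_def x'_def)
  then have "df i x' \<bullet> (z - x') = 0"
    by (subst inner_df_blockproj) (simp add: blockproj_diff)
  then show ?thesis
    using f_cong_blockproj[OF P] block_descent[of i z x] True by simp
next
  case False
  then have P: "blockproj blk i x' = blockproj blk i x"
    by (auto simp: vec_eq_iff bc_update_def x'_def)
  have "df i x \<bullet> (z - x') = df i x \<bullet> (z - x)"
    by (subst (1 2) inner_df_blockproj) (simp add: blockproj_diff P)
  then show ?thesis
    using f_cong_blockproj[OF P] df_cong_blockproj[OF P] False by simp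
qed

lemma Fsum_update_linearization:
  fixes x z :: "real^'c" and I :: "'n set"
  defines "x' \<equiv> bc_update blk x z I"
  shows "Fsum f x' + gradF df x' \<bullet> (z - x')
    \<le> Fsum f x + gradF df x \<bullet> (z - x)
       + (1 / real CARD('n)) * (\<Sum>j\<in>UNIV. (if blk j \<in> I then L (blk j) / 2 else 0) * ((z - x) $ j)\<^sup>2)"
proof -
  have "(\<Sum>i\<in>UNIV. f i x' + df i x' \<bullet> (z - x'))
      \<le> (\<Sum>i\<in>UNIV. f i x + df i x \<bullet> (z - x)
           + (if i \<in> I then L i / 2 else 0) * (norm (blockproj blk i (z - x)))\<^sup>2)"
    unfolding x'_def by (intro sum_mono block_update_linearization)
  also have "\<dots> = (\<Sum>i\<in>UNIV. f i x) + (\<Sum>i\<in>UNIV. df i x \<bullet> (z - x))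
      + (\<Sum>j\<in>UNIV. (if blk j \<in> I then L (blk j) / 2 else 0) * ((z - x) $ j)\<^sup>2)"
    by (simp only: sum.distrib sum_blocks_norm_blockproj)
  finally show ?thesis
    unfolding Fsum_def gradF_def inner_sum_left inner_scaleR_left sum.distrib distrib_left[symmetric]
    by (intro mult_left_mono) simp_all
qed

end

section \<open>Convex extended-real functions and their proximal points\<close>

lemma convex_ext_combination:
  assumes "convex_ext G" "\<bar>G a\<bar> \<noteq> \<infinity>" "\<bar>G b\<bar> \<noteq> \<infinity>" "0 \<le> t" "t \<le> 1"
  shows "G ((1 - t) *\<^sub>R a + t *\<^sub>R b) \<le> ereal ((1 - t) * real_of_ereal (G a) + t * real_of_ereal (G b))"
proof -
  let ?S = "{(x, s::real). G x \<le> ereal s}"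
  have "(a, real_of_ereal (G a)) \<in> ?S" "(b, real_of_ereal (G b)) \<in> ?S"
    using assms by (auto simp: ereal_real)
  from convexD[OF assms(1)[unfolded convex_ext_def] this, of "1 - t" t] assms(4,5)
  show ?thesis by (simp add: scaleR_prod_def)
qed

lemma prox_Ginv_finite:
  assumes "proper_fun G" "z \<in> prox_Ginv blk \<gamma> G u"
  shows "\<bar>G z\<bar> \<noteq> \<infinity>"
proof -
  obtain w where w: "G w \<noteq> \<infinity>"
    using assms(1) unfolding proper_fun_def by blast
  have "G z + ereal (Ginv_normsq blk \<gamma> (z - u) / 2) \<le> G w + ereal (Ginv_normsq blk \<gamma> (w - u) / 2)"
    using assms(2) unfolding prox_Ginv_def by blast
  then have "G z \<noteq> \<infinity>" using w by auto
  moreover have "G z \<noteq> -\<infinity>" using assms(1) unfolding proper_fun_def by blast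
  ultimately show ?thesis by auto
qed

lemma Ginv_normsq_convex_combination:
  "Ginv_normsq blk \<gamma> ((1 - t) *\<^sub>R z + t *\<^sub>R v - u)
     = Ginv_normsq blk \<gamma> (z - u) - 2 * t * (\<Sum>j\<in>UNIV. (u $ j - z $ j) * (v $ j - z $ j) / \<gamma> (blk j))
       + t\<^sup>2 * Ginv_normsq blk \<gamma> (v - z)"
proof -
  have "((1 - t) *\<^sub>R z + t *\<^sub>R v - u) $ j = (z $ j - u $ j) + t * (v $ j - z $ j)" for j
    by (simp add: algebra_simps)
  then show ?thesis
    unfolding Ginv_normsq_eq_sum
    by (simp add: power2_eq_square add_divide_distrib diff_divide_distrib algebra_simps
        sum.distrib sum_subtractf sum_distrib_left)
qed

text \<open>Comparing \<open>z\<close> with the points \<open>(1 - t) z + t v\<close> and letting \<open>t \<rightarrow> 0\<close> yields the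
  first-order optimality condition \<open>\<Gamma>\<^sup>-\<^sup>1(u - z) \<in> \<partial>G(z)\<close>.\<close>

lemma prox_Ginv_variational_ineq:
  assumes "proper_fun G" "convex_ext G" "\<And>i. \<gamma> i > 0" and z: "z \<in> prox_Ginv blk \<gamma> G u"
  shows "G z + ereal (\<Sum>j\<in>UNIV. (u $ j - z $ j) * (v $ j - z $ j) / \<gamma> (blk j)) \<le> G v"
proof (cases "G v = \<infinity>")
  case True
  then show ?thesis by simp
next
  case False
  have gz: "\<bar>G z\<bar> \<noteq> \<infinity>" by (rule prox_Ginv_finite[OF assms(1) z])
  have gv: "\<bar>G v\<bar> \<noteq> \<infinity>" using False assms(1) unfolding proper_fun_def by auto
  define a where "a = real_of_ereal (G z)"
  define b where "b = real_of_ereal (G v)"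
  define S where "S = (\<Sum>j\<in>UNIV. (u $ j - z $ j) * (v $ j - z $ j) / \<gamma> (blk j))"
  define C where "C = Ginv_normsq blk \<gamma> (v - z)"
  have Ga: "G z = ereal a" and Gb: "G v = ereal b"
    using gz gv by (simp_all add: a_def b_def ereal_real)
  have "C / 2 \<ge> 0"
    unfolding C_def Ginv_normsq_eq_sum using assms(3) by (intro divide_nonneg_pos sum_nonneg) auto
  moreover have "0 \<le> t * (b - a - S) + t\<^sup>2 * (C / 2)" if t: "0 < t" "t \<le> 1" for t
  proof -
    let ?w = "(1 - t) *\<^sub>R z + t *\<^sub>R v"
    have "G z + ereal (Ginv_normsq blk \<gamma> (z - u) / 2) \<le> G ?w + ereal (Ginv_normsq blk \<gamma> (?w - u) / 2)"
      using z unfolding prox_Ginv_def by blast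
    also have "\<dots> \<le> ereal ((1 - t) * a + t * b) + ereal (Ginv_normsq blk \<gamma> (?w - u) / 2)"
      using convex_ext_combination[OF assms(2) gz gv, of t] t
      unfolding a_def b_def by (intro add_right_mono) simp
    finally have "a + Ginv_normsq blk \<gamma> (z - u) / 2 \<le> (1 - t) * a + t * b + Ginv_normsq blk \<gamma> (?w - u) / 2"
      unfolding Ga by simp
    then show ?thesis
      unfolding Ginv_normsq_convex_combination S_def[symmetric] C_def[symmetric] by (simp add: field_simps)
  qed
  ultimately have "0 \<le> b - a - S"
    by (rule nonneg_of_quadratic_nonneg_near_zero)
  then show ?thesis
    unfolding S_def[symmetric] Ga Gb by simp
qed

lemma completed_square_bound:
  fixes g x z y \<gamma> \<mu> N :: real
  assumes "\<gamma> > 0" "\<mu> > 0" "N > 0"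
  shows "g * (z - x) + (z - x)\<^sup>2 / \<gamma> / 2 - ((x - \<gamma> * g) - z) * (y - z) / \<gamma> - g * (y - x) - \<mu> / 2 * (y - x)\<^sup>2 / N
         \<le> (N - \<gamma> * \<mu>) / (2 * \<gamma>\<^sup>2 * \<mu>) * (z - x)\<^sup>2"
proof -
  have "(N - \<gamma> * \<mu>) / (2 * \<gamma>\<^sup>2 * \<mu>) * (z - x)\<^sup>2
      - (g * (z - x) + (z - x)\<^sup>2 / \<gamma> / 2 - ((x - \<gamma> * g) - z) * (y - z) / \<gamma> - g * (y - x) - \<mu> / 2 * (y - x)\<^sup>2 / N)
     = \<mu> / (2 * N) * ((y - x) - N * (z - x) / (\<gamma> * \<mu>))\<^sup>2"
    using assms by (simp add: field_simps power2_eq_square)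
  moreover have "\<mu> / (2 * N) * ((y - x) - N * (z - x) / (\<gamma> * \<mu>))\<^sup>2 \<ge> 0"
    using assms by simp
  ultimately show ?thesis by linarith
qed

section \<open>The deterministic estimates\<close>

locale bc_setting = block_smooth blk f df L \<mu>
  for blk :: "'c::finite \<Rightarrow> 'n::finite"
    and f :: "'n \<Rightarrow> real^'c \<Rightarrow> real"
    and df :: "'n \<Rightarrow> real^'c \<Rightarrow> real^'c"
    and L \<mu> :: "'n \<Rightarrow> real" +
  fixes \<gamma> :: "'n \<Rightarrow> real"
    and G :: "real^'c \<Rightarrow> ereal"
  assumes blocks_nonempty: "surj blk"
    and L_pos: "\<And>i. L i > 0"
    and \<mu>_pos: "\<And>i. \<mu> i > 0"
    and G_proper: "proper_fun G" and G_convex: "convex_ext G"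
    and \<gamma>_pos: "\<And>i. \<gamma> i > 0"
    and \<gamma>_bound: "\<And>i. \<gamma> i * L i < real CARD('n)"
begin

definition fb_model :: "real^'c \<Rightarrow> real^'c \<Rightarrow> real" where
  "fb_model x w = Fsum f x + gradF df x \<bullet> (w - x) + Ginv_normsq blk \<gamma> (w - x) / 2"

text \<open>\<open>decrease_coef i = \<xi>\<^sub>i / (2\<gamma>\<^sub>i)\<close> in the paper's notation.\<close>

definition decrease_coef :: "'n \<Rightarrow> real" where
  "decrease_coef i = (real CARD('n) - \<gamma> i * L i) / (2 * real CARD('n) * \<gamma> i)"

definition gap_coef :: "'n \<Rightarrow> real" where
  "gap_coef i = (real CARD('n) - \<gamma> i * \<mu> i) / (2 * (\<gamma> i)\<^sup>2 * \<mu> i)"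

lemma \<gamma>_neq_0 [simp]: "\<gamma> i \<noteq> 0"
  using \<gamma>_pos[of i] by simp

lemma \<mu>_neq_0 [simp]: "\<mu> i \<noteq> 0"
  using \<mu>_pos[of i] by simp

lemma decrease_coef_pos: "decrease_coef i > 0"
  unfolding decrease_coef_def using \<gamma>_bound[of i] \<gamma>_pos[of i] by simp

lemma \<mu>_le_L: "\<mu> i \<le> L i"
  using blocks_nonempty strong_convexity_le_lipschitz by (metis surjD)

lemma \<gamma>_\<mu>_bound: "\<gamma> i * \<mu> i < real CARD('n)"
  using mult_left_mono[OF \<mu>_le_L[of i], of "\<gamma> i"] \<gamma>_pos[of i] \<gamma>_bound[of i] by linarith

lemma gap_coef_pos: "gap_coef i > 0"
  unfolding gap_coef_def using \<gamma>_\<mu>_bound[of i] \<gamma>_pos[of i] \<mu>_pos[of i] by simp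

lemma decrease_coef_lt_gap_coef: "decrease_coef i < gap_coef i"
proof -
  let ?N = "real CARD('n)"
  have "\<gamma> i * \<mu> i \<le> \<gamma> i * L i"
    using mult_left_mono[OF \<mu>_le_L[of i], of "\<gamma> i"] \<gamma>_pos[of i] by simp
  then have "decrease_coef i \<le> (?N - \<gamma> i * \<mu> i) / (2 * ?N * \<gamma> i)"
    unfolding decrease_coef_def using \<gamma>_pos[of i] by (intro divide_right_mono) auto
  also have "\<dots> < gap_coef i"
  proof -
    have "2 * (\<gamma> i)\<^sup>2 * \<mu> i < 2 * ?N * \<gamma> i"
      using \<gamma>_\<mu>_bound[of i] \<gamma>_pos[of i] by (simp add: power2_eq_square)
    then show ?thesis
      unfolding gap_coef_def using \<gamma>_\<mu>_bound[of i] \<gamma>_pos[of i] \<mu>_pos[of i]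
      by (intro divide_strict_left_mono) (auto simp: power2_eq_square)
  qed
  finally show ?thesis .
qed

lemma FBE_le_fb_model: "FBE blk \<gamma> f df G x \<le> ereal (fb_model x w) + G w"
  unfolding FBE_def fb_model_def by (rule INF_lower) simp

lemma fb_model_eq_prox_objective:
  "fb_model x w = Fsum f x - (\<Sum>j\<in>UNIV. \<gamma> (blk j) * (gradF df x $ j)\<^sup>2 / 2)
     + Ginv_normsq blk \<gamma> (w - (x - Gamma_mult blk \<gamma> (gradF df x))) / 2"
proof -
  have "(\<Sum>j\<in>UNIV. gradF df x $ j * (w - x) $ j + ((w - x) $ j)\<^sup>2 / \<gamma> (blk j) / 2)
      = (\<Sum>j\<in>UNIV. ((w - (x - Gamma_mult blk \<gamma> (gradF df x))) $ j)\<^sup>2 / \<gamma> (blk j) / 2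
          - \<gamma> (blk j) * (gradF df x $ j)\<^sup>2 / 2)"
    using \<gamma>_pos by (intro sum.cong) (auto simp: Gamma_mult_def field_simps power2_eq_square)
  then show ?thesis
    unfolding fb_model_def inner_real_vec_eq_sum Ginv_normsq_eq_sum
    by (simp add: sum.distrib sum_subtractf sum_divide_distrib)
qed

lemma FBE_eq_fb_model:
  assumes "z \<in> Tmap blk \<gamma> df G x"
  shows "FBE blk \<gamma> f df G x = ereal (fb_model x z) + G z"
proof (rule antisym)
  show "FBE blk \<gamma> f df G x \<le> ereal (fb_model x z) + G z"
    by (rule FBE_le_fb_model)
next
  let ?u = "x - Gamma_mult blk \<gamma> (gradF df x)"
  let ?K = "Fsum f x - (\<Sum>j\<in>UNIV. \<gamma> (blk j) * (gradF df x $ j)\<^sup>2 / 2)"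
  have shift: "ereal (fb_model x w) + G w = ereal ?K + (G w + ereal (Ginv_normsq blk \<gamma> (w - ?u) / 2))" for w
    unfolding fb_model_eq_prox_objective by (simp add: ac_simps)
  have "ereal (fb_model x z) + G z \<le> ereal (fb_model x w) + G w" for w
    unfolding shift using assms unfolding Tmap_def prox_Ginv_def by (intro add_left_mono) blast
  then show "ereal (fb_model x z) + G z \<le> FBE blk \<gamma> f df G x"
    unfolding FBE_def fb_model_def by (intro INF_greatest) simp
qed

lemma fb_model_update:
  fixes x z :: "real^'c"
  shows "fb_model (bc_update blk x z I) z
     \<le> fb_model x z - (\<Sum>j\<in>UNIV. if blk j \<in> I then decrease_coef (blk j) * (z $ j - x $ j)\<^sup>2 else 0)"
proof -
  let ?x' = "bc_update blk x z I"
  let ?N = "real CARD('n)"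
  have "Ginv_normsq blk \<gamma> (z - ?x') = (\<Sum>j\<in>UNIV. if blk j \<in> I then 0 else (z $ j - x $ j)\<^sup>2 / \<gamma> (blk j))"
    unfolding Ginv_normsq_eq_sum by (rule sum.cong) (auto simp: bc_update_def)
  moreover have "(if blk j \<in> I then decrease_coef (blk j) * (z $ j - x $ j)\<^sup>2 else 0)
      = (z $ j - x $ j)\<^sup>2 / \<gamma> (blk j) / 2 - (if blk j \<in> I then 0 else (z $ j - x $ j)\<^sup>2 / \<gamma> (blk j)) / 2
        - (1 / ?N) * ((if blk j \<in> I then L (blk j) / 2 else 0) * ((z - x) $ j)\<^sup>2)" for j
    using \<gamma>_pos[of "blk j"] by (auto simp: decrease_coef_def field_simps)
  ultimately have "(\<Sum>j\<in>UNIV. if blk j \<in> I then decrease_coef (blk j) * (z $ j - x $ j)\<^sup>2 else 0)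
      = Ginv_normsq blk \<gamma> (z - x) / 2 - Ginv_normsq blk \<gamma> (z - ?x') / 2
        - (1 / ?N) * (\<Sum>j\<in>UNIV. (if blk j \<in> I then L (blk j) / 2 else 0) * ((z - x) $ j)\<^sup>2)"
    by (simp add: Ginv_normsq_eq_sum sum_subtractf sum_divide_distrib sum_distrib_left)
  then show ?thesis
    using Fsum_update_linearization[of x z I] unfolding fb_model_def by linarith
qed

lemma Fsum_le_fb_model: "Fsum f z \<le> fb_model x z"
proof -
  have "(1 / real CARD('n)) * (\<Sum>j\<in>UNIV. L (blk j) / 2 * ((z - x) $ j)\<^sup>2) \<le> Ginv_normsq blk \<gamma> (z - x) / 2"
    unfolding Ginv_normsq_eq_sum sum_distrib_left sum_divide_distrib
  proof (rule sum_mono)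
    fix j
    have "L (blk j) / real CARD('n) \<le> 1 / \<gamma> (blk j)"
      using \<gamma>_pos[of "blk j"] \<gamma>_bound[of "blk j"] by (simp add: field_simps)
    then have "L (blk j) / real CARD('n) * ((z - x) $ j)\<^sup>2 / 2 \<le> 1 / \<gamma> (blk j) * ((z - x) $ j)\<^sup>2 / 2"
      by (intro divide_right_mono mult_right_mono) auto
    then show "1 / real CARD('n) * (L (blk j) / 2 * ((z - x) $ j)\<^sup>2) \<le> ((z - x) $ j)\<^sup>2 / \<gamma> (blk j) / 2"
      by simp
  qed
  then show ?thesis
    using Fsum_descent[of z x] unfolding fb_model_def by linarith
qed

lemma fb_model_gap:
  assumes z: "z \<in> Tmap blk \<gamma> df G x" and Gy: "\<bar>G y\<bar> \<noteq> \<infinity>"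
  shows "fb_model x z + real_of_ereal (G z) - (Fsum f y + real_of_ereal (G y))
     \<le> (\<Sum>j\<in>UNIV. gap_coef (blk j) * (z $ j - x $ j)\<^sup>2)"
proof -
  let ?g = "gradF df x"
  let ?u = "x - Gamma_mult blk \<gamma> ?g"
  let ?N = "real CARD('n)"
  define S where "S = (\<Sum>j\<in>UNIV. (?u $ j - z $ j) * (y $ j - z $ j) / \<gamma> (blk j))"
  have zp: "z \<in> prox_Ginv blk \<gamma> G ?u" using z unfolding Tmap_def .
  have "G z + ereal S \<le> G y"
    unfolding S_def by (rule prox_Ginv_variational_ineq[OF G_proper G_convex \<gamma>_pos zp])
  then have vi: "real_of_ereal (G z) + S \<le> real_of_ereal (G y)"
    using prox_Ginv_finite[OF G_proper zp] Gy by (cases "G z"; cases "G y") auto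
  have "(\<Sum>j\<in>UNIV. ?g $ j * (z $ j - x $ j) + (z $ j - x $ j)\<^sup>2 / \<gamma> (blk j) / 2
        - (?u $ j - z $ j) * (y $ j - z $ j) / \<gamma> (blk j) - ?g $ j * (y $ j - x $ j)
        - \<mu> (blk j) / 2 * (y $ j - x $ j)\<^sup>2 / ?N)
     \<le> (\<Sum>j\<in>UNIV. gap_coef (blk j) * (z $ j - x $ j)\<^sup>2)"
    unfolding gap_coef_def
    by (intro sum_mono, simp only: Gamma_mult_def vector_minus_component vec_lambda_beta,
        rule completed_square_bound[OF \<gamma>_pos \<mu>_pos]) simp
  then have "fb_model x z - Fsum f x - S - ?g \<bullet> (y - x) - (1 / ?N) * (\<Sum>j\<in>UNIV. \<mu> (blk j) / 2 * ((y - x) $ j)\<^sup>2)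
      \<le> (\<Sum>j\<in>UNIV. gap_coef (blk j) * (z $ j - x $ j)\<^sup>2)"
    unfolding S_def fb_model_def inner_real_vec_eq_sum Ginv_normsq_eq_sum
    by (simp add: sum.distrib sum_subtractf sum_divide_distrib)
  then show ?thesis
    using vi Fsum_strong_convexity[of x y] by linarith
qed

lemma quadratic_growth:
  assumes Gz: "\<bar>G z\<bar> \<noteq> \<infinity>" and Gy: "\<bar>G y\<bar> \<noteq> \<infinity>" and min: "\<And>w. Phi f G y \<le> Phi f G w"
  shows "wnormsq (\<lambda>j. \<mu> (blk j) / real CARD('n)) (z - y) / 2
     \<le> (Fsum f z + real_of_ereal (G z)) - (Fsum f y + real_of_ereal (G y))"
proof -
  let ?d = "z - y"
  let ?N = "real CARD('n)"
  let ?g = "gradF df y"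
  define a where "a = real_of_ereal (G y)"
  define b where "b = real_of_ereal (G z)"
  define C where "C = (1 / ?N) * (\<Sum>j\<in>UNIV. L (blk j) / 2 * (?d $ j)\<^sup>2)"
  have "C \<ge> 0"
    unfolding C_def using L_pos by (intro mult_nonneg_nonneg sum_nonneg) (auto simp: less_imp_le)
  moreover have "0 \<le> t * (?g \<bullet> ?d + b - a) + t\<^sup>2 * C" if t: "0 < t" "t \<le> 1" for t
  proof -
    let ?w = "(1 - t) *\<^sub>R y + t *\<^sub>R z"
    have "Phi f G y \<le> Phi f G ?w" by (rule min)
    also have "\<dots> \<le> ereal (Fsum f ?w) + ereal ((1 - t) * a + t * b)"
      unfolding Phi_def a_def b_def using convex_ext_combination[OF G_convex Gy Gz, of t] t
      by (intro add_left_mono) auto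
    finally have "Fsum f y + a \<le> Fsum f ?w + ((1 - t) * a + t * b)"
      unfolding Phi_def a_def using Gy by (cases "G y") auto
    moreover have "Fsum f ?w \<le> Fsum f y + ?g \<bullet> (t *\<^sub>R ?d) + t\<^sup>2 * C"
    proof -
      have "?w - y = t *\<^sub>R ?d" by (simp add: algebra_simps)
      moreover have "(\<Sum>j\<in>UNIV. L (blk j) / 2 * ((t *\<^sub>R ?d) $ j)\<^sup>2) = t\<^sup>2 * (\<Sum>j\<in>UNIV. L (blk j) / 2 * (?d $ j)\<^sup>2)"
        unfolding sum_distrib_left by (rule sum.cong[OF refl]) (simp add: power_mult_distrib)
      ultimately show ?thesis
        using Fsum_descent[of ?w y] unfolding C_def by simp
    qed
    ultimately show ?thesis by (simp add: algebra_simps)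
  qed
  ultimately have "0 \<le> ?g \<bullet> ?d + b - a"
    by (rule nonneg_of_quadratic_nonneg_near_zero)
  moreover have "wnormsq (\<lambda>j. \<mu> (blk j) / ?N) ?d / 2 = (1 / ?N) * (\<Sum>j\<in>UNIV. \<mu> (blk j) / 2 * (?d $ j)\<^sup>2)"
    unfolding wnormsq_def by (simp add: sum_distrib_left sum_divide_distrib)
  ultimately show ?thesis
    using Fsum_strong_convexity[of y z] unfolding a_def b_def by linarith
qed

end

lemma tuned_stepsize_coef_ratio:
  fixes N \<mu> \<kappa> s \<gamma> L :: real
  assumes "N > 0" "\<mu> > 0" "0 < s" "s < 1" "\<kappa> * (1 - s\<^sup>2) = 1" "\<gamma> = N / \<mu> * (1 - s)" "L = \<kappa> * \<mu>"
  shows "(N - \<gamma> * \<mu>) / (2 * \<gamma>\<^sup>2 * \<mu>) = \<kappa> * (1 + s)\<^sup>2 * ((N - \<gamma> * L) / (2 * N * \<gamma>))"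
proof -
  have pos: "0 < 1 - s" "0 < 1 + s" using assms(3,4) by auto
  have "\<kappa> * ((1 - s) * (1 + s)) = 1"
    using assms(5) by (simp add: power2_eq_square algebra_simps)
  then have \<kappa>: "\<kappa> = 1 / ((1 - s) * (1 + s))"
    using pos by (simp add: eq_divide_eq)
  have \<gamma>: "\<gamma> = N * (1 - s) / \<mu>" using assms(6) by simp
  have "N - \<gamma> * \<mu> = N * s"
    using assms(2) unfolding \<gamma> by (simp add: field_simps)
  moreover have "N - \<gamma> * L = N * s / (1 + s)"
  proof -
    have "\<gamma> * L = N * (1 - s) * \<kappa>" using assms(2) unfolding \<gamma> assms(7) by simp
    also have "\<dots> = N / (1 + s)" using pos unfolding \<kappa> by simp
    finally show ?thesis using pos by (simp add: field_simps)
  qed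
  \<comment> \<open>\<open>a = 1 - s\<close> and \<open>b = 1 + s\<close> are kept abstract, so that clearing denominators
     does not expand them\<close>
  moreover have "N * s / (2 * (N * a / \<mu>)\<^sup>2 * \<mu>) = s * \<mu> / (2 * N * a\<^sup>2)"
    and "1 / (a * b) * b\<^sup>2 * (N * s / b / (2 * N * (N * a / \<mu>))) = s * \<mu> / (2 * N * a\<^sup>2)"
    if "a > 0" "b > 0" for a b
    using that assms(1,2) by (simp_all add: field_simps power2_eq_square)
  ultimately show ?thesis
    using pos unfolding \<gamma> \<kappa> by simp
qed

section \<open>The randomized iteration\<close>

lemma expectation_sum_if_mem:
  fixes M :: "'a::finite pmf"
  shows "measure_pmf.expectation M (\<lambda>I. \<Sum>j\<in>J. if P j I then w j else 0)
       = (\<Sum>j\<in>J. w j * measure_pmf.prob M {I. P j I})"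
proof -
  have "(\<lambda>I. if P j I then w j else 0) = (\<lambda>I. w j * indicator {I. P j I} I)" for j
    by (auto simp: indicator_def)
  then show ?thesis
    by (subst Bochner_Integration.integral_sum) (simp_all add: integrable_measure_pmf_finite)
qed

lemma finite_set_pmf_bc_hist: "finite (set_pmf (bc_hist Q k))"
  for Q :: "('n::finite) set list \<Rightarrow> 'n set pmf"
  by (induction k) auto

lemma expectation_bc_hist_Suc:
  fixes Q :: "('n::finite) set list \<Rightarrow> 'n set pmf" and V :: "'n set list \<Rightarrow> real"
  shows "measure_pmf.expectation (bc_hist Q (Suc k)) V
    = measure_pmf.expectation (bc_hist Q k) (\<lambda>h. measure_pmf.expectation (Q h) (\<lambda>I. V (I # h)))"
proof -
  have "measure_pmf.expectation (bc_hist Q (Suc k)) V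
      = (\<Sum>h\<in>set_pmf (bc_hist Q k). pmf (bc_hist Q k) h *\<^sub>R measure_pmf.expectation (map_pmf (\<lambda>I. I # h) (Q h)) V)"
    unfolding bc_hist.simps by (rule pmf_expectation_bind[OF finite_set_pmf_bc_hist]) auto
  also have "\<dots> = measure_pmf.expectation (bc_hist Q k) (\<lambda>h. measure_pmf.expectation (Q h) (\<lambda>I. V (I # h)))"
    by (subst integral_measure_pmf[OF finite_set_pmf_bc_hist]) auto
  finally show ?thesis .
qed

locale bc_random = bc_setting blk f df L \<mu> \<gamma> G
  for blk :: "'c::finite \<Rightarrow> 'n::finite"
    and f :: "'n \<Rightarrow> real^'c \<Rightarrow> real"
    and df :: "'n \<Rightarrow> real^'c \<Rightarrow> real^'c"
    and L \<mu> \<gamma> :: "'n \<Rightarrow> real"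
    and G :: "real^'c \<Rightarrow> ereal" +
  fixes Q :: "'n set list \<Rightarrow> 'n set pmf"
    and sel :: "'n set list \<Rightarrow> real^'c"
    and x0 xstar :: "real^'c"
    and p :: "'n \<Rightarrow> real"
  assumes xstar_min: "\<And>y. Phi f G xstar \<le> Phi f G y"
    and p_pos: "\<And>i. p i > 0"
    and sampling: "\<And>h i. measure_pmf.prob (Q h) {I. i \<in> I} \<ge> p i"
    and sel_T: "\<And>h. sel h \<in> Tmap blk \<gamma> df G (bc_iter blk x0 sel h)"
begin

abbreviation iterate :: "'n set list \<Rightarrow> real^'c" where
  "iterate h \<equiv> bc_iter blk x0 sel h"

definition min_value :: real where
  "min_value = Fsum f xstar + real_of_ereal (G xstar)"

definition fbe_gap :: "'n set list \<Rightarrow> real" where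
  "fbe_gap h = fb_model (iterate h) (sel h) + real_of_ereal (G (sel h)) - min_value"

lemma G_xstar_finite: "\<bar>G xstar\<bar> \<noteq> \<infinity>"
proof -
  obtain w where "G w \<noteq> \<infinity>" using G_proper unfolding proper_fun_def by blast
  then have "Phi f G xstar \<noteq> \<infinity>"
    using xstar_min[of w] unfolding Phi_def by auto
  moreover have "G xstar \<noteq> -\<infinity>" using G_proper unfolding proper_fun_def by blast
  ultimately show ?thesis unfolding Phi_def by auto
qed

lemma Phi_xstar: "Phi f G xstar = ereal min_value"
  using G_xstar_finite unfolding Phi_def min_value_def by (cases "G xstar") auto

lemma G_sel_finite: "\<bar>G (sel h)\<bar> \<noteq> \<infinity>"
  using sel_T[of h] unfolding Tmap_def by (rule prox_Ginv_finite[OF G_proper])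

lemma FBE_iterate: "FBE blk \<gamma> f df G (iterate h) = ereal (fbe_gap h + min_value)"
  using FBE_eq_fb_model[OF sel_T[of h]] G_sel_finite[of h]
  unfolding fbe_gap_def by (cases "G (sel h)") auto

lemma FBE_iterate_gap: "FBE blk \<gamma> f df G (iterate h) - Phi f G xstar = ereal (fbe_gap h)"
  unfolding FBE_iterate Phi_xstar by simp

lemma fbe_gap_step:
  "fbe_gap (I # h)
     \<le> fbe_gap h - (\<Sum>j\<in>UNIV. if blk j \<in> I then decrease_coef (blk j) * (sel h $ j - iterate h $ j)\<^sup>2 else 0)"
proof -
  have "ereal (fbe_gap (I # h) + min_value) = FBE blk \<gamma> f df G (iterate (I # h))"
    by (rule FBE_iterate[symmetric])
  also have "\<dots> \<le> ereal (fb_model (iterate (I # h)) (sel h)) + G (sel h)"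
    by (rule FBE_le_fb_model)
  finally have "fbe_gap (I # h) + min_value \<le> fb_model (iterate (I # h)) (sel h) + real_of_ereal (G (sel h))"
    using G_sel_finite[of h] by (cases "G (sel h)") auto
  then show ?thesis
    using fb_model_update[of "iterate h" "sel h" I] unfolding fbe_gap_def by simp
qed

lemma fbe_gap_le: "fbe_gap h \<le> (\<Sum>j\<in>UNIV. gap_coef (blk j) * (sel h $ j - iterate h $ j)\<^sup>2)"
  using fb_model_gap[OF sel_T G_xstar_finite] unfolding fbe_gap_def min_value_def .

lemma Phi_gap_le_fbe_gap: "real_of_ereal (Phi f G (sel h) - Phi f G xstar) \<le> fbe_gap h"
  using Fsum_le_fb_model[of "sel h" "iterate h"] G_sel_finite[of h]
  unfolding Phi_xstar unfolding Phi_def fbe_gap_def by (cases "G (sel h)") auto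

lemma dist_le_fbe_gap: "wnormsq (\<lambda>j. \<mu> (blk j) / real CARD('n)) (sel h - xstar) / 2 \<le> fbe_gap h"
  using quadratic_growth[OF G_sel_finite[of h] G_xstar_finite xstar_min] Fsum_le_fb_model[of "sel h" "iterate h"]
  unfolding fbe_gap_def min_value_def by linarith

lemma fbe_gap_init:
  assumes "G x0 = ereal g0"
  shows "fbe_gap [] \<le> Fsum f x0 + g0 - min_value"
proof -
  have "ereal (fbe_gap [] + min_value) = FBE blk \<gamma> f df G x0"
    using FBE_iterate[of "[]"] by simp
  also have "\<dots> \<le> ereal (fb_model x0 x0) + G x0"
    by (rule FBE_le_fb_model)
  also have "\<dots> = ereal (Fsum f x0 + g0)"
    by (simp add: assms fb_model_def Ginv_normsq_eq_sum)
  finally show ?thesis by simp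
qed

definition admissible_rate :: "real \<Rightarrow> bool" where
  "admissible_rate c \<longleftrightarrow> 0 \<le> c \<and> (\<forall>i. c * gap_coef i \<le> p i * decrease_coef i)"

lemma admissible_rate_lt_1:
  assumes "admissible_rate c"
  shows "c < 1"
proof -
  obtain i :: 'n where True by blast
  have "p i \<le> 1"
    using sampling[where h="[]" and i=i] measure_pmf.prob_le_1[of "Q []" "{I. i \<in> I}"] by linarith
  have "c * gap_coef i \<le> p i * decrease_coef i"
    using assms unfolding admissible_rate_def by blast
  also have "\<dots> \<le> 1 * decrease_coef i"
    using \<open>p i \<le> 1\<close> less_imp_le[OF decrease_coef_pos] by (rule mult_right_mono)
  also have "\<dots> < gap_coef i" using decrease_coef_lt_gap_coef by simp
  finally show ?thesis using gap_coef_pos[of i] by simp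
qed

lemma expected_fbe_gap_step:
  assumes "admissible_rate c"
  shows "measure_pmf.expectation (Q h) (\<lambda>I. fbe_gap (I # h)) \<le> (1 - c) * fbe_gap h"
proof -
  define r where "r j = (sel h $ j - iterate h $ j)\<^sup>2" for j
  have int: "integrable (measure_pmf (Q h)) g" for g :: "'n set \<Rightarrow> real"
    by (simp add: integrable_measure_pmf_finite)
  have "measure_pmf.expectation (Q h) (\<lambda>I. fbe_gap (I # h))
     \<le> measure_pmf.expectation (Q h) (\<lambda>I. fbe_gap h - (\<Sum>j\<in>UNIV. if blk j \<in> I then decrease_coef (blk j) * r j else 0))"
    by (rule Bochner_Integration.integral_mono[OF int int]) (unfold r_def, rule fbe_gap_step)
  also have "\<dots> = fbe_gap h - (\<Sum>j\<in>UNIV. decrease_coef (blk j) * r j * measure_pmf.prob (Q h) {I. blk j \<in> I})"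
    using int by (simp add: expectation_sum_if_mem)
  also have "\<dots> \<le> fbe_gap h - (\<Sum>j\<in>UNIV. c * (gap_coef (blk j) * r j))"
  proof -
    have "c * (gap_coef (blk j) * r j) \<le> decrease_coef (blk j) * r j * measure_pmf.prob (Q h) {I. blk j \<in> I}" for j
    proof -
      have "c * gap_coef (blk j) \<le> p (blk j) * decrease_coef (blk j)"
        using assms unfolding admissible_rate_def by blast
      also have "\<dots> \<le> measure_pmf.prob (Q h) {I. blk j \<in> I} * decrease_coef (blk j)"
        using sampling less_imp_le[OF decrease_coef_pos] by (rule mult_right_mono)
      finally have "c * gap_coef (blk j) * r j \<le> measure_pmf.prob (Q h) {I. blk j \<in> I} * decrease_coef (blk j) * r j"
        by (rule mult_right_mono) (simp add: r_def)
      then show ?thesis by (simp add: mult_ac)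
    qed
    then show ?thesis by (simp add: sum_mono)
  qed
  also have "\<dots> \<le> fbe_gap h - c * fbe_gap h"
    using mult_left_mono[OF fbe_gap_le[of h], of c] assms
    unfolding admissible_rate_def r_def by (simp add: sum_distrib_left mult_ac)
  finally show ?thesis by (simp add: algebra_simps)
qed

lemma expected_fbe_gap_hist:
  assumes "admissible_rate c"
  shows "measure_pmf.expectation (bc_hist Q k) fbe_gap \<le> (1 - c) ^ k * fbe_gap []"
proof (induction k)
  case 0
  then show ?case by simp
next
  case (Suc k)
  have c1: "0 \<le> 1 - c" using admissible_rate_lt_1[OF assms] by simp
  have int: "integrable (measure_pmf (bc_hist Q k)) g" for g :: "'n set list \<Rightarrow> real"
    by (rule integrable_measure_pmf_finite[OF finite_set_pmf_bc_hist])
  have "measure_pmf.expectation (bc_hist Q (Suc k)) fbe_gap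
      \<le> measure_pmf.expectation (bc_hist Q k) (\<lambda>h. (1 - c) * fbe_gap h)"
    unfolding expectation_bc_hist_Suc
    by (intro Bochner_Integration.integral_mono int expected_fbe_gap_step assms)
  also have "\<dots> \<le> (1 - c) * ((1 - c) ^ k * fbe_gap [])"
    using mult_left_mono[OF Suc.IH c1] by simp
  finally show ?case by simp
qed

lemma expectation_bc_hist_le:
  assumes "admissible_rate c" and Y: "\<And>h. Y h \<le> fbe_gap h"
  shows "ereal (measure_pmf.expectation (bc_hist Q k) Y) \<le> (Phi f G x0 - Phi f G xstar) * ereal ((1 - c) ^ k)"
proof -
  have c1: "c < 1" by (rule admissible_rate_lt_1[OF assms(1)])
  then have pos: "(1 - c) ^ k > 0" by simp
  have "measure_pmf.expectation (bc_hist Q k) Y \<le> measure_pmf.expectation (bc_hist Q k) fbe_gap"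
    by (intro Bochner_Integration.integral_mono Y integrable_measure_pmf_finite finite_set_pmf_bc_hist)
  also have "\<dots> \<le> (1 - c) ^ k * fbe_gap []"
    by (rule expected_fbe_gap_hist[OF assms(1)])
  finally have E: "measure_pmf.expectation (bc_hist Q k) Y \<le> (1 - c) ^ k * fbe_gap []" .
  show ?thesis
  proof (cases "G x0")
    case (real g0)
    then have "(1 - c) ^ k * fbe_gap [] \<le> (1 - c) ^ k * (Fsum f x0 + g0 - min_value)"
      using fbe_gap_init pos by (intro mult_left_mono) auto
    then show ?thesis
      using E unfolding Phi_xstar unfolding Phi_def real by (simp add: mult.commute)
  next
    case PInf
    then show ?thesis using c1 pos unfolding Phi_xstar unfolding Phi_def by simp
  next
    case MInf
    then show ?thesis using G_proper unfolding proper_fun_def by blast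
  qed
qed

lemma bc_rates_if_admissible:
  assumes "admissible_rate c"
  shows "bc_rates blk \<gamma> f df G Q sel x0 xstar \<mu> c"
  unfolding bc_rates_def
proof (intro conjI allI)
  fix h
  show "ereal (measure_pmf.expectation (Q h) (\<lambda>I. real_of_ereal (FBE blk \<gamma> f df G (iterate (I # h)) - Phi f G xstar)))
        \<le> ereal (1 - c) * (FBE blk \<gamma> f df G (iterate h) - Phi f G xstar)"
    using expected_fbe_gap_step[OF assms, of h] unfolding FBE_iterate_gap by simp
qed (intro expectation_bc_hist_le assms Phi_gap_le_fbe_gap dist_le_fbe_gap)+

lemma admissible_rate_min_max:
  "admissible_rate
     ((MIN i. (real CARD('n) - \<gamma> i * L i) / real CARD('n) * p i / \<gamma> i)
      / (MAX i. (real CARD('n) - \<gamma> i * \<mu> i) / (\<gamma> i ^ 2 * \<mu> i)))"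
proof -
  define num where "num i = 2 * (p i * decrease_coef i)" for i
  define den where "den i = 2 * gap_coef i" for i
  have num_eq: "(\<lambda>i. (real CARD('n) - \<gamma> i * L i) / real CARD('n) * p i / \<gamma> i) = num"
    unfolding num_def decrease_coef_def by (auto simp: field_simps)
  have den_eq: "(\<lambda>i. (real CARD('n) - \<gamma> i * \<mu> i) / (\<gamma> i ^ 2 * \<mu> i)) = den"
    unfolding den_def gap_coef_def by (auto simp: field_simps)
  have min_pos: "Min (range num) > 0"
    unfolding num_def using p_pos decrease_coef_pos by (subst Min_gr_iff) auto
  obtain i0 :: 'n where True by blast
  have "den i0 \<le> Max (range den)"
    by (rule Max_ge) auto
  then have max_pos: "Max (range den) > 0"
    using gap_coef_pos[of i0] unfolding den_def by linarith
  define c where "c = Min (range num) / Max (range den)"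
  have "0 \<le> c" unfolding c_def using less_imp_le[OF min_pos] max_pos by (rule divide_nonneg_pos)
  moreover have "c * gap_coef i \<le> p i * decrease_coef i" for i
  proof -
    have "c * den i \<le> c * Max (range den)"
      using \<open>0 \<le> c\<close> by (intro mult_left_mono Max_ge) auto
    also have "\<dots> = Min (range num)" unfolding c_def using max_pos by simp
    also have "\<dots> \<le> num i" by (rule Min_le) auto
    finally show ?thesis unfolding num_def den_def by simp
  qed
  ultimately show ?thesis
    unfolding admissible_rate_def num_eq den_eq c_def by blast
qed

lemma admissible_rate_tuned:
  assumes \<kappa>_gt_1: "\<forall>i. L i / \<mu> i > 1"
    and \<gamma>_tuned: "\<forall>i. \<gamma> i = real CARD('n) / \<mu> i * (1 - sqrt (1 - 1 / (L i / \<mu> i)))"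
    and p_tuned: "\<forall>i. p i = (sqrt (L i / \<mu> i) + sqrt (L i / \<mu> i - 1))\<^sup>2
                     / (\<Sum>j\<in>UNIV. (sqrt (L j / \<mu> j) + sqrt (L j / \<mu> j - 1))\<^sup>2)"
  shows "admissible_rate (1 / (\<Sum>j\<in>UNIV. (sqrt (L j / \<mu> j) + sqrt (L j / \<mu> j - 1))\<^sup>2))"
proof -
  define W where "W i = (sqrt (L i / \<mu> i) + sqrt (L i / \<mu> i - 1))\<^sup>2" for i
  have "W i > 0" for i
  proof -
    have "sqrt (L i / \<mu> i) > 0" using \<kappa>_gt_1 by (metis less_trans real_sqrt_gt_zero zero_less_one)
    moreover have "sqrt (L i / \<mu> i - 1) \<ge> 0" using \<kappa>_gt_1[rule_format, of i] by simp
    ultimately have "sqrt (L i / \<mu> i) + sqrt (L i / \<mu> i - 1) > 0"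
      by (rule add_pos_nonneg)
    then show ?thesis unfolding W_def by simp
  qed
  then have "sum W UNIV > 0" by (intro sum_pos) auto
  moreover have "1 / sum W UNIV * gap_coef i \<le> p i * decrease_coef i" for i
  proof -
    define \<kappa> where "\<kappa> = L i / \<mu> i"
    define s where "s = sqrt (1 - 1 / \<kappa>)"
    have \<kappa>1: "\<kappa> > 1" using \<kappa>_gt_1 unfolding \<kappa>_def by auto
    then have s: "0 < s" "s < 1" "s\<^sup>2 = 1 - 1 / \<kappa>"
      unfolding s_def by (auto simp: real_sqrt_lt_1_iff field_simps)
    have "gap_coef i = \<kappa> * (1 + s)\<^sup>2 * decrease_coef i"
      unfolding gap_coef_def decrease_coef_def
    proof (rule tuned_stepsize_coef_ratio[OF _ \<mu>_pos s(1,2)])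
      show "\<kappa> * (1 - s\<^sup>2) = 1" using \<kappa>1 unfolding s(3) by simp
      show "\<gamma> i = real CARD('n) / \<mu> i * (1 - s)" using \<gamma>_tuned unfolding s_def \<kappa>_def by simp
      show "L i = \<kappa> * \<mu> i" unfolding \<kappa>_def using \<mu>_pos[of i] by simp
    qed simp
    moreover have "W i = \<kappa> * (1 + s)\<^sup>2"
    proof -
      have "sqrt (\<kappa> - 1) = sqrt \<kappa> * s"
        unfolding s_def real_sqrt_mult[symmetric] using \<kappa>1 by (simp add: field_simps)
      then have "W i = (sqrt \<kappa> * (1 + s))\<^sup>2"
        unfolding W_def \<kappa>_def[symmetric] by (simp add: algebra_simps)
      then show ?thesis using \<kappa>1 by (simp add: power_mult_distrib)
    qed
    moreover have "p i = W i / sum W UNIV" using p_tuned unfolding W_def by simp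
    ultimately show ?thesis by simp
  qed
  ultimately show ?thesis
    unfolding admissible_rate_def W_def by simp
qed

end

theorem theorem2p7:
  fixes blk :: "'c::finite \<Rightarrow> 'n::finite"
    and f :: "'n \<Rightarrow> real^'c \<Rightarrow> real"
    and df :: "'n \<Rightarrow> real^'c \<Rightarrow> real^'c"
    and L \<mu> \<gamma> p :: "'n \<Rightarrow> real"
    and G :: "real^'c \<Rightarrow> ereal"
    and Q :: "'n set list \<Rightarrow> 'n set pmf"
    and sel :: "'n set list \<Rightarrow> real^'c"
    and x0 xstar :: "real^'c"
  assumes blocks_nonempty: "surj blk"
    and f_block: "\<And>i x. f i x = f i (blockproj blk i x)"
    and f_grad: "\<And>i x. GDERIV (f i) x :> df i x"
    and L_pos: "\<And>i. L i > 0"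
    and f_lipschitz: "\<And>i x y. norm (df i x - df i y) \<le> L i * norm (blockproj blk i x - blockproj blk i y)"
    and \<mu>_pos: "\<And>i. \<mu> i > 0"
    and f_strongly_convex: "\<And>i. convex_on UNIV (\<lambda>x. f i x - \<mu> i / 2 * (norm (blockproj blk i x))\<^sup>2)"
    and G_proper: "proper_fun G" and G_lsc: "lsc_fun G" and G_convex: "convex_ext G"
    and xstar_min: "\<And>y. Phi f G xstar \<le> Phi f G y"
    and \<gamma>_pos: "\<And>i. \<gamma> i > 0"
    and \<gamma>_bound: "\<And>i. \<gamma> i * L i < real CARD('n)"
    and p_pos: "\<And>i. p i > 0"
    and sampling: "\<And>h i. measure_pmf.prob (Q h) {I. i \<in> I} \<ge> p i"
    and sel_T: "\<And>h. sel h \<in> Tmap blk \<gamma> df G (bc_iter blk x0 sel h)"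
  shows "bc_rates blk \<gamma> f df G Q sel x0 xstar \<mu>
           ((MIN i. (real CARD('n) - \<gamma> i * L i) / real CARD('n) * p i / \<gamma> i)
            / (MAX i. (real CARD('n) - \<gamma> i * \<mu> i) / (\<gamma> i ^ 2 * \<mu> i)))
       \<and> ((\<forall>i. L i / \<mu> i > 1)
          \<and> (\<forall>i. \<gamma> i = real CARD('n) / \<mu> i * (1 - sqrt (1 - 1 / (L i / \<mu> i))))
          \<and> (\<forall>i. p i = (sqrt (L i / \<mu> i) + sqrt (L i / \<mu> i - 1))\<^sup>2
                     / (\<Sum>j\<in>UNIV. (sqrt (L j / \<mu> j) + sqrt (L j / \<mu> j - 1))\<^sup>2))
          \<longrightarrow> bc_rates blk \<gamma> f df G Q sel x0 xstar \<mu>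
                (1 / (\<Sum>j\<in>UNIV. (sqrt (L j / \<mu> j) + sqrt (L j / \<mu> j - 1))\<^sup>2)))"
proof -
  interpret bc_random blk f df L \<mu> \<gamma> G Q sel x0 xstar p
    by unfold_locales (use assms in auto)
  show ?thesis
    using bc_rates_if_admissible[OF admissible_rate_min_max]
      bc_rates_if_admissible[OF admissible_rate_tuned] by blast
qed

end
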